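(* Let $m\in\mathbb{N}$ and $a,b\in\mathbb{R}_+$ be such that $a+(m-1)b/2>1$ and $ma>1$. Then \[ \int_{\mathbb{R}^m}\prod_{j=1}^m\frac{1}{1+|x_j|^a}\prod_{1\le i< j \le m}\frac{1}{1+|x_i-x_j|^b}\,\mathrm{d}x_1\cdots\mathrm{d}x_m<\infty. \]
   Context: $\mathbb{R}_+=[0,\infty)$. *)

theory Defs
  imports "HOL-Analysis.Analysis"
begin

end

theory Submission
  imports Defs
begin

(*
  Induction on the number of points, for the stronger claim that the integral stays bounded
  uniformly in c when the one-body factors 1/(1 + |x_j - c|^a) are centred at an arbitrary c.
  Let x_k be the point nearest to c. For j \<noteq> k we have |x_k - c| \<le> |x_j - c| and
  |x_j - x_k| \<le> 2 |x_j - c|, so splitting the exponent a = s + (a - s) moves part of the decay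
  of x_j onto x_k and the rest onto the pair (j, k):
    1/(1 + |x_j - c|^a) \<le> 4 * 2^(a - s) / ((1 + |x_k - c|^s) * (1 + |x_j - x_k|^(a - s))).
  The integrand is thus dominated by a sum over k of 1/(1 + |x_k - c|^(a + (n - 1) s)) times
  the (n - 1)-point integrand with exponents (a - s + b, b) centred at x_k. Integrating first
  over the other points (induction hypothesis, uniform in the centre) and then over x_k gives
  a finite bound, provided a + (n - 1) s > 1 and the hypotheses hold for n - 1 points and
  exponent a - s + b. These are linear conditions on s, compatible exactly under the
  hypotheses for n points.
*)

definition decay :: "real \<Rightarrow> real \<Rightarrow> real" where
  "decay a t = 1 / (1 + \<bar>t\<bar> powr a)"

lemma one_plus_abs_powr_pos [simp]: "0 < 1 + \<bar>t :: real\<bar> powr a"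
  using powr_ge_zero[of "\<bar>t\<bar>" a] by linarith

lemma decay_nonneg: "0 \<le> decay a t"
  unfolding decay_def by (simp add: less_imp_le)

lemma decay_le_one: "decay a t \<le> 1"
  unfolding decay_def by (simp add: divide_simps)

lemma decay_minus_commute: "decay a (s - t) = decay a (t - s)"
  unfolding decay_def by (simp add: abs_minus_commute)

lemma borel_measurable_decay[measurable]: "decay a \<in> borel_measurable borel"
  unfolding decay_def by measurable

lemma decay_mult_le: "decay a t * decay b t \<le> decay (a + b) t"
proof -
  have "1 + \<bar>t\<bar> powr (a + b) \<le> (1 + \<bar>t\<bar> powr a) * (1 + \<bar>t\<bar> powr b)"
    by (simp add: powr_add algebra_simps)
  then show ?thesis
    unfolding decay_def by (simp add: divide_simps)
qed

lemma decay_mult_power_le: "decay a t * decay s t ^ n \<le> decay (a + real n * s) t"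
proof (induction n)
  case (Suc n)
  have "decay a t * decay s t ^ Suc n = (decay a t * decay s t ^ n) * decay s t"
    by simp
  also have "\<dots> \<le> decay (a + real n * s) t * decay s t"
    using Suc.IH by (rule mult_right_mono) (rule decay_nonneg)
  also have "\<dots> \<le> decay (a + real (Suc n) * s) t"
    using decay_mult_le[of "a + real n * s" t s] by (simp add: algebra_simps)
  finally show ?case .
qed simp

lemma powr_le_max_one_powr:
  fixes x :: real
  assumes "0 \<le> x" "0 \<le> s" "s \<le> a"
  shows "x powr s \<le> max 1 (x powr a)"
proof (cases "x \<le> 1")
  case True
  then show ?thesis using assms by (simp add: powr_le1)
next
  case False
  then have "x powr s \<le> x powr a"
    using assms by (intro powr_mono) auto
  then show ?thesis by simp
qed

lemma decay_le_split:
  assumes "0 \<le> s" "s \<le> a"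
  shows "decay a t \<le> 4 * (decay s t * decay (a - s) t)"
proof -
  let ?M = "max 1 (\<bar>t\<bar> powr a)"
  have "\<bar>t\<bar> powr s \<le> ?M" "\<bar>t\<bar> powr (a - s) \<le> ?M"
    using assms by (auto intro: powr_le_max_one_powr)
  moreover have "(1 + \<bar>t\<bar> powr s) * (1 + \<bar>t\<bar> powr (a - s))
      = 1 + \<bar>t\<bar> powr s + \<bar>t\<bar> powr (a - s) + \<bar>t\<bar> powr a"
    by (simp add: algebra_simps powr_add[symmetric])
  ultimately have "(1 + \<bar>t\<bar> powr s) * (1 + \<bar>t\<bar> powr (a - s)) \<le> 4 * (1 + \<bar>t\<bar> powr a)"
    using powr_ge_zero[of "\<bar>t\<bar>" a] by (smt (verit))
  then show ?thesis
    unfolding decay_def by (simp add: divide_simps)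
qed

lemma decay_antimono:
  assumes "0 \<le> a" "\<bar>s\<bar> \<le> \<bar>t\<bar>"
  shows "decay a t \<le> decay a s"
  unfolding decay_def using assms by (simp add: divide_simps powr_mono2)

lemma decay_triangle:
  assumes "0 \<le> a" "\<bar>y - c\<bar> \<le> \<bar>x - c\<bar>"
  shows "decay a (x - c) \<le> 2 powr a * decay a (x - y)"
proof -
  have "\<bar>x - y\<bar> powr a \<le> (2 * \<bar>x - c\<bar>) powr a"
    using assms abs_triangle_ineq4[of "x - c" "y - c"] by (intro powr_mono2) auto
  also have "\<dots> = 2 powr a * \<bar>x - c\<bar> powr a"
    by (simp add: powr_mult)
  finally have "1 + \<bar>x - y\<bar> powr a \<le> 2 powr a * (1 + \<bar>x - c\<bar> powr a)"
    using ge_one_powr_ge_zero[of 2 a] assms by (simp add: algebra_simps)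
  then show ?thesis
    unfolding decay_def by (simp add: divide_simps)
qed

lemma nn_integral_decay_finite:
  assumes "1 < p"
  shows "(\<integral>\<^sup>+t. ennreal (decay p t) \<partial>lborel) < \<infinity>"
proof -
  let ?tail = "\<lambda>t. ennreal (t powr -p) * indicator {1..} t"
  have tail: "(\<integral>\<^sup>+t. ?tail t \<partial>lborel) = ennreal (-(1 powr (-p + 1)) / (-p + 1))"
    by (rule nn_integral_has_integral_lebesgue'[OF _ has_integral_powr_to_inf]) (use assms in auto)
  have reflected_tail: "(\<integral>\<^sup>+t. ?tail (-t) \<partial>lborel) = (\<integral>\<^sup>+t. ?tail t \<partial>lborel)"
    by (subst nn_integral_real_affine[where c="-1" and t=0]) auto
  have "(\<integral>\<^sup>+t. ennreal (decay p t) \<partial>lborel)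
      \<le> (\<integral>\<^sup>+t. ?tail t + ?tail (-t) + indicator {-1..1} t \<partial>lborel)"
  proof (rule nn_integral_mono)
    fix t :: real
    consider "1 < t" | "t < -1" | "-1 \<le> t \<and> t \<le> 1" by linarith
    then show "ennreal (decay p t) \<le> ?tail t + ?tail (-t) + indicator {-1..1} t"
    proof cases
      case 1
      then have "decay p t \<le> t powr -p"
        unfolding decay_def by (simp add: powr_minus divide_simps add_pos_nonneg)
      then show ?thesis using 1 by (simp add: indicator_def)
    next
      case 2
      then have "decay p t \<le> (-t) powr -p"
        unfolding decay_def by (simp add: powr_minus divide_simps add_pos_nonneg)
      then show ?thesis using 2 by (simp add: indicator_def)
    next
      case 3
      then have "ennreal (decay p t) \<le> indicator {-1..1} t"
        using decay_le_one[of p t] by (simp add: indicator_def)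
      then show ?thesis by (intro add_increasing) auto
    qed
  qed
  also have "\<dots> = (\<integral>\<^sup>+t. ?tail t \<partial>lborel) + (\<integral>\<^sup>+t. ?tail (-t) \<partial>lborel)
      + (\<integral>\<^sup>+t. indicator {-1..1::real} t \<partial>lborel)"
    by (simp add: nn_integral_add)
  also have "\<dots> < \<infinity>"
    unfolding reflected_tail tail by simp
  finally show ?thesis .
qed

lemma nn_integral_lborel_shift:
  fixes f :: "real \<Rightarrow> ennreal"
  assumes "f \<in> borel_measurable borel"
  shows "(\<integral>\<^sup>+t. f (t - c) \<partial>lborel) = (\<integral>\<^sup>+t. f t \<partial>lborel)"
  using nn_integral_real_affine[OF assms, of 1 "-c"] by simp

lemma decay_le_nearest:
  assumes "0 \<le> s" "s \<le> a" "\<bar>y - c\<bar> \<le> \<bar>x - c\<bar>"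
  shows "decay a (x - c) * decay b (x - y)
    \<le> 4 * 2 powr (a - s) * decay s (y - c) * decay (a - s + b) (x - y)"
proof -
  have "decay a (x - c) \<le> 4 * (decay s (x - c) * decay (a - s) (x - c))"
    using assms(1,2) by (rule decay_le_split)
  also have "\<dots> \<le> 4 * (decay s (y - c) * (2 powr (a - s) * decay (a - s) (x - y)))"
    using assms decay_nonneg
    by (intro mult_left_mono mult_mono decay_antimono decay_triangle) auto
  finally have "decay a (x - c) * decay b (x - y)
      \<le> 4 * (decay s (y - c) * (2 powr (a - s) * decay (a - s) (x - y))) * decay b (x - y)"
    by (rule mult_right_mono) (rule decay_nonneg)
  also have "\<dots> = 4 * 2 powr (a - s) * decay s (y - c) * (decay (a - s) (x - y) * decay b (x - y))"
    by (simp add: algebra_simps)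
  also have "\<dots> \<le> 4 * 2 powr (a - s) * decay s (y - c) * decay (a - s + b) (x - y)"
    using decay_nonneg[of s "y - c"] by (intro mult_left_mono decay_mult_le) auto
  finally show ?thesis .
qed

definition ordered_pairs :: "'i::linorder set \<Rightarrow> ('i \<times> 'i) set" where
  "ordered_pairs I = {(i, j). i \<in> I \<and> j \<in> I \<and> i < j}"

lemma finite_ordered_pairs: "finite I \<Longrightarrow> finite (ordered_pairs I)"
  unfolding ordered_pairs_def by (rule finite_subset[of _ "I \<times> I"]) auto

lemma ordered_pairs_insert:
  assumes "k \<notin> J"
  shows "ordered_pairs (insert k J) = ordered_pairs J \<union> (\<lambda>j. (min j k, max j k)) ` J"
proof (intro set_eqI iffI)
  fix p assume "p \<in> ordered_pairs (insert k J)"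
  then obtain i j where p: "p = (i, j)" "i \<in> insert k J" "j \<in> insert k J" "i < j"
    unfolding ordered_pairs_def by auto
  then consider "i = k" "j \<in> J" | "j = k" "i \<in> J" | "i \<in> J" "j \<in> J"
    by auto
  then show "p \<in> ordered_pairs J \<union> (\<lambda>j. (min j k, max j k)) ` J"
  proof cases
    case 1
    then have "p = (min j k, max j k)" using p by auto
    with 1 show ?thesis by blast
  next
    case 2
    then have "p = (min i k, max i k)" using p by auto
    with 2 show ?thesis by blast
  qed (use p in \<open>auto simp: ordered_pairs_def\<close>)
next
  fix p assume "p \<in> ordered_pairs J \<union> (\<lambda>j. (min j k, max j k)) ` J"
  then show "p \<in> ordered_pairs (insert k J)"
    using assms unfolding ordered_pairs_def by (auto simp: min_def max_def not_le le_less split: if_splits)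
qed

definition interaction_weight :: "'i::linorder set \<Rightarrow> real \<Rightarrow> real \<Rightarrow> real \<Rightarrow> ('i \<Rightarrow> real) \<Rightarrow> real" where
  "interaction_weight I a b c x =
     (\<Prod>j\<in>I. decay a (x j - c)) * (\<Prod>(i, j)\<in>ordered_pairs I. decay b (x i - x j))"

lemma interaction_weight_nonneg: "0 \<le> interaction_weight I a b c x"
  unfolding interaction_weight_def
  by (intro mult_nonneg_nonneg prod_nonneg) (auto simp: decay_nonneg)

lemma interaction_weight_insert:
  assumes "finite J" "k \<notin> J"
  shows "interaction_weight (insert k J) a b c x = decay a (x k - c) *
     (\<Prod>j\<in>J. decay a (x j - c) * decay b (x j - x k)) *
     (\<Prod>(i, j)\<in>ordered_pairs J. decay b (x i - x j))"
proof -
  have "inj_on (\<lambda>j. (min j k, max j k)) J"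
    using assms(2) by (auto simp: inj_on_def min_def max_def split: if_splits)
  then have "(\<Prod>(i, j)\<in>(\<lambda>j. (min j k, max j k)) ` J. decay b (x i - x j)) = (\<Prod>j\<in>J. decay b (x j - x k))"
    by (subst prod.reindex) (auto intro!: prod.cong simp: min_def max_def decay_minus_commute)
  moreover have "ordered_pairs J \<inter> (\<lambda>j. (min j k, max j k)) ` J = {}"
    using assms(2) unfolding ordered_pairs_def by (auto simp: min_def max_def split: if_splits)
  ultimately have "(\<Prod>(i, j)\<in>ordered_pairs (insert k J). decay b (x i - x j)) =
      (\<Prod>(i, j)\<in>ordered_pairs J. decay b (x i - x j)) * (\<Prod>j\<in>J. decay b (x j - x k))"
    unfolding ordered_pairs_insert[OF assms(2)]
    by (subst prod.union_disjoint) (use assms in \<open>auto simp: finite_ordered_pairs\<close>)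
  then show ?thesis
    unfolding interaction_weight_def using assms by (simp add: prod.distrib)
qed

lemma interaction_weight_insert_nearest_le:
  assumes "finite J" "k \<notin> J" "0 \<le> s" "s \<le> a"
    and nearest: "\<And>j. j \<in> J \<Longrightarrow> \<bar>x k - c\<bar> \<le> \<bar>x j - c\<bar>"
  shows "interaction_weight (insert k J) a b c x \<le> (4 * 2 powr (a - s)) ^ card J *
    decay (a + real (card J) * s) (x k - c) * interaction_weight J (a - s + b) b (x k) x"
proof -
  let ?C = "4 * 2 powr (a - s)" and ?n = "card J"
  let ?pairs = "\<Prod>(i, j)\<in>ordered_pairs J. decay b (x i - x j)"
  have pairs_nonneg: "0 \<le> ?pairs"
    by (intro prod_nonneg) (auto simp: decay_nonneg)
  have "(\<Prod>j\<in>J. decay a (x j - c) * decay b (x j - x k))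
      \<le> (\<Prod>j\<in>J. ?C * decay s (x k - c) * decay (a - s + b) (x j - x k))"
    using assms by (intro prod_mono) (auto simp: decay_nonneg decay_le_nearest)
  also have "\<dots> = ?C ^ ?n * decay s (x k - c) ^ ?n * (\<Prod>j\<in>J. decay (a - s + b) (x j - x k))"
    by (simp add: prod.distrib power_mult_distrib)
  finally have "interaction_weight (insert k J) a b c x \<le> decay a (x k - c) *
      (?C ^ ?n * decay s (x k - c) ^ ?n * (\<Prod>j\<in>J. decay (a - s + b) (x j - x k))) * ?pairs"
    unfolding interaction_weight_insert[OF assms(1,2)]
    using pairs_nonneg decay_nonneg by (intro mult_right_mono mult_left_mono) auto
  also have "\<dots> = ?C ^ ?n * (decay a (x k - c) * decay s (x k - c) ^ ?n) *
      interaction_weight J (a - s + b) b (x k) x"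
    by (simp add: interaction_weight_def algebra_simps)
  also have "\<dots> \<le> ?C ^ ?n * decay (a + real ?n * s) (x k - c) * interaction_weight J (a - s + b) b (x k) x"
    by (intro mult_right_mono mult_left_mono decay_mult_power_le interaction_weight_nonneg) auto
  finally show ?thesis .
qed

lemma interaction_weight_fun_upd:
  "k \<notin> J \<Longrightarrow> interaction_weight J a b c (x(k := t)) = interaction_weight J a b c x"
  unfolding interaction_weight_def ordered_pairs_def
  by (intro arg_cong2[where f="(*)"] prod.cong) auto

lemma borel_measurable_interaction_weight:
  assumes "J \<subseteq> I" and [measurable]: "f \<in> borel_measurable (PiM I (\<lambda>_. lborel))"
  shows "(\<lambda>x. interaction_weight J a b (f x) x) \<in> borel_measurable (PiM I (\<lambda>_. lborel))"
proof -
  have "(\<lambda>x. \<Prod>j\<in>J. decay a (x j - f x)) \<in> borel_measurable (PiM I (\<lambda>_. lborel))"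
  proof (rule borel_measurable_prod)
    fix j assume "j \<in> J"
    then have [measurable]: "j \<in> I" using assms(1) by auto
    show "(\<lambda>x. decay a (x j - f x)) \<in> borel_measurable (PiM I (\<lambda>_. lborel))" by measurable
  qed
  moreover have "(\<lambda>x. \<Prod>(i, j)\<in>ordered_pairs J. decay b (x i - x j)) \<in> borel_measurable (PiM I (\<lambda>_. lborel))"
  proof (rule borel_measurable_prod, unfold case_prod_beta)
    fix p assume "p \<in> ordered_pairs J"
    then have [measurable]: "fst p \<in> I" "snd p \<in> I"
      using assms(1) unfolding ordered_pairs_def by auto
    show "(\<lambda>x. decay b (x (fst p) - x (snd p))) \<in> borel_measurable (PiM I (\<lambda>_. lborel))"
      by measurable
  qed
  ultimately show ?thesis
    unfolding interaction_weight_def by measurable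
qed

lemma nn_integral_insert_interaction_weight_le:
  assumes "finite J" "k \<notin> J"
  shows "(\<integral>\<^sup>+x. ennreal (decay p (x k - c) * interaction_weight J a b (x k) x) \<partial>PiM (insert k J) (\<lambda>_. lborel))
    \<le> (\<integral>\<^sup>+t. ennreal (decay p t) \<partial>lborel) *
       (SUP c. \<integral>\<^sup>+x. ennreal (interaction_weight J a b c x) \<partial>PiM J (\<lambda>_. lborel))"
    (is "_ \<le> _ * ?S")
proof -
  interpret product_sigma_finite "\<lambda>_. lborel" by standard
  have [measurable]: "k \<in> insert k J" by simp
  have [measurable]: "(\<lambda>x. interaction_weight J a b (x k) x) \<in> borel_measurable (PiM (insert k J) (\<lambda>_. lborel))"
    by (rule borel_measurable_interaction_weight) auto
  have [measurable]: "(\<lambda>x. interaction_weight J a b t x) \<in> borel_measurable (PiM J (\<lambda>_. lborel))" for t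
    by (rule borel_measurable_interaction_weight) auto
  have "(\<integral>\<^sup>+x. ennreal (decay p (x k - c) * interaction_weight J a b (x k) x) \<partial>PiM (insert k J) (\<lambda>_. lborel))
      = (\<integral>\<^sup>+t. (\<integral>\<^sup>+x. ennreal (decay p (t - c) * interaction_weight J a b t x) \<partial>PiM J (\<lambda>_. lborel)) \<partial>lborel)"
    using assms by (subst product_nn_integral_insert_rev) (auto simp: interaction_weight_fun_upd)
  also have "\<dots> = (\<integral>\<^sup>+t. ennreal (decay p (t - c)) *
      (\<integral>\<^sup>+x. ennreal (interaction_weight J a b t x) \<partial>PiM J (\<lambda>_. lborel)) \<partial>lborel)"
    by (simp add: ennreal_mult' decay_nonneg nn_integral_cmult)
  also have "\<dots> \<le> (\<integral>\<^sup>+t. ennreal (decay p (t - c)) * ?S \<partial>lborel)"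
    by (intro nn_integral_mono mult_left_mono SUP_upper) auto
  also have "\<dots> = (\<integral>\<^sup>+t. ennreal (decay p t) \<partial>lborel) * ?S"
    by (simp add: nn_integral_multc nn_integral_lborel_shift[where f="\<lambda>t. ennreal (decay p t)"])
  finally show ?thesis .
qed

lemma nn_integral_interaction_weight_empty:
  "(\<integral>\<^sup>+x. ennreal (interaction_weight {} a b c x) \<partial>PiM {} M) = 1"
  by (simp add: interaction_weight_def ordered_pairs_def PiM_empty)

lemma interaction_weight_le_sum_nearest:
  assumes "finite I" "I \<noteq> {}" "0 \<le> s" "s \<le> a"
  shows "interaction_weight I a b c x \<le> (\<Sum>k\<in>I. (4 * 2 powr (a - s)) ^ (card I - 1) *
    (decay (a + real (card I - 1) * s) (x k - c) * interaction_weight (I - {k}) (a - s + b) b (x k) x))"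
proof -
  define k where "k = arg_min_on (\<lambda>j. \<bar>x j - c\<bar>) I"
  have k: "k \<in> I" and nearest: "\<And>j. j \<in> I \<Longrightarrow> \<bar>x k - c\<bar> \<le> \<bar>x j - c\<bar>"
    unfolding k_def using arg_min_if_finite(1)[OF assms(1,2)] arg_min_least[OF assms(1,2)] by auto
  have "interaction_weight I a b c x = interaction_weight (insert k (I - {k})) a b c x"
    using k by (simp add: insert_absorb)
  also have "\<dots> \<le> (4 * 2 powr (a - s)) ^ (card I - 1) *
      (decay (a + real (card I - 1) * s) (x k - c) * interaction_weight (I - {k}) (a - s + b) b (x k) x)"
    using interaction_weight_insert_nearest_le[of "I - {k}" k s a x c b] assms k nearest
    by (simp add: mult.assoc)
  also have "\<dots> \<le> (\<Sum>k\<in>I. (4 * 2 powr (a - s)) ^ (card I - 1) *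
      (decay (a + real (card I - 1) * s) (x k - c) * interaction_weight (I - {k}) (a - s + b) b (x k) x))"
    using assms k by (intro member_le_sum mult_nonneg_nonneg decay_nonneg interaction_weight_nonneg) auto
  finally show ?thesis .
qed

lemma nn_integral_interaction_weight_le_sum:
  assumes I: "finite I" "I \<noteq> {}" and s: "0 \<le> s" "s \<le> a"
  defines "C \<equiv> (4 * 2 powr (a - s)) ^ (card I - 1)" and "p \<equiv> a + real (card I - 1) * s"
  shows "(\<integral>\<^sup>+x. ennreal (interaction_weight I a b c x) \<partial>PiM I (\<lambda>_. lborel))
    \<le> (\<Sum>k\<in>I. ennreal C * ((\<integral>\<^sup>+t. ennreal (decay p t) \<partial>lborel) *
      (SUP c. \<integral>\<^sup>+x. ennreal (interaction_weight (I - {k}) (a - s + b) b c x) \<partial>PiM (I - {k}) (\<lambda>_. lborel))))"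
proof -
  let ?T = "\<lambda>k x. ennreal (decay p (x k - c) * interaction_weight (I - {k}) (a - s + b) b (x k) x)"
  have C: "0 \<le> C"
    by (simp add: C_def)
  have [measurable]: "?T k \<in> borel_measurable (PiM I (\<lambda>_. lborel))" if "k \<in> I" for k
  proof -
    have [measurable]: "k \<in> I" by fact
    have "(\<lambda>x. interaction_weight (I - {k}) (a - s + b) b (x k) x) \<in> borel_measurable (PiM I (\<lambda>_. lborel))"
      by (rule borel_measurable_interaction_weight) auto
    then show ?thesis by measurable
  qed
  have "(\<integral>\<^sup>+x. ennreal (interaction_weight I a b c x) \<partial>PiM I (\<lambda>_. lborel))
      \<le> (\<integral>\<^sup>+x. (\<Sum>k\<in>I. ennreal C * ?T k x) \<partial>PiM I (\<lambda>_. lborel))"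
  proof (rule nn_integral_mono)
    fix x
    have "ennreal (interaction_weight I a b c x)
        \<le> ennreal (\<Sum>k\<in>I. C * (decay p (x k - c) * interaction_weight (I - {k}) (a - s + b) b (x k) x))"
      using interaction_weight_le_sum_nearest[OF I s] unfolding C_def p_def by (rule ennreal_leI)
    also have "\<dots> = (\<Sum>k\<in>I. ennreal C * ?T k x)"
      using C by (subst sum_ennreal[symmetric])
        (auto simp: ennreal_mult' decay_nonneg interaction_weight_nonneg)
    finally show "ennreal (interaction_weight I a b c x) \<le> (\<Sum>k\<in>I. ennreal C * ?T k x)" .
  qed
  also have "\<dots> = (\<Sum>k\<in>I. ennreal C * (\<integral>\<^sup>+x. ?T k x \<partial>PiM I (\<lambda>_. lborel)))"
    by (simp add: nn_integral_sum nn_integral_cmult)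
  also have "\<dots> \<le> (\<Sum>k\<in>I. ennreal C * ((\<integral>\<^sup>+t. ennreal (decay p t) \<partial>lborel) *
      (SUP c. \<integral>\<^sup>+x. ennreal (interaction_weight (I - {k}) (a - s + b) b c x) \<partial>PiM (I - {k}) (\<lambda>_. lborel))))"
  proof (intro sum_mono mult_left_mono)
    fix k assume "k \<in> I"
    then have "insert k (I - {k}) = I" by auto
    then show "(\<integral>\<^sup>+x. ?T k x \<partial>PiM I (\<lambda>_. lborel)) \<le> (\<integral>\<^sup>+t. ennreal (decay p t) \<partial>lborel) *
        (SUP c. \<integral>\<^sup>+x. ennreal (interaction_weight (I - {k}) (a - s + b) b c x) \<partial>PiM (I - {k}) (\<lambda>_. lborel))"
      using nn_integral_insert_interaction_weight_le[of "I - {k}" k] I by simp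
  qed auto
  finally show ?thesis .
qed

lemma SUP_nn_integral_interaction_weight_finite_step:
  assumes I: "finite I" "I \<noteq> {}" and s: "0 \<le> s" "s \<le> a"
    and confining: "1 < a + real (card I - 1) * s"
    and removed: "\<And>k. k \<in> I \<Longrightarrow>
      (SUP c. \<integral>\<^sup>+x. ennreal (interaction_weight (I - {k}) (a - s + b) b c x) \<partial>PiM (I - {k}) (\<lambda>_. lborel)) < \<infinity>"
  shows "(SUP c. \<integral>\<^sup>+x. ennreal (interaction_weight I a b c x) \<partial>PiM I (\<lambda>_. lborel)) < \<infinity>"
proof -
  have "(SUP c. \<integral>\<^sup>+x. ennreal (interaction_weight I a b c x) \<partial>PiM I (\<lambda>_. lborel))
      \<le> (\<Sum>k\<in>I. ennreal ((4 * 2 powr (a - s)) ^ (card I - 1)) *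
        ((\<integral>\<^sup>+t. ennreal (decay (a + real (card I - 1) * s) t) \<partial>lborel) *
        (SUP c. \<integral>\<^sup>+x. ennreal (interaction_weight (I - {k}) (a - s + b) b c x) \<partial>PiM (I - {k}) (\<lambda>_. lborel))))"
    by (rule SUP_least) (rule nn_integral_interaction_weight_le_sum[OF I s])
  also have "\<dots> < \<infinity>"
    using removed nn_integral_decay_finite[OF confining] I
    by (simp add: ennreal_mult_less_top)
  finally show ?thesis .
qed

lemma split_exponent_exists:
  fixes a b N :: real
  assumes N: "1 \<le> N" and a: "0 \<le> a" and b: "0 \<le> b"
    and H1: "1 < a + N * b / 2" and H2: "1 < (N + 1) * a"
  obtains s where "0 \<le> s" "s \<le> a" "1 < a + N * s"
    "1 < (a - s + b) + (N - 1) * b / 2" "1 < N * (a - s + b)"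
proof -
  define lo where "lo = max 0 ((1 - a) / N)"
  define hi where "hi = min a (min (a + (N + 1) * b / 2 - 1) (a + b - 1 / N))"
  have Na: "a \<le> N * a" and Nb: "0 \<le> N * b"
    using N a b by (simp_all add: mult_le_cancel_right1)
  have "N + 1 < (N + 1) * (a + N * b / 2)"
    using H1 N by (simp add: mult_strict_left_mono[of 1 _ "N + 1", simplified])
  then have "1 - a < N * (a + (N + 1) * b / 2 - 1)"
    by (simp add: algebra_simps)
  moreover have "1 - a < N * a" "1 - a < N * (a + b - 1 / N)" "1 / N < a + b"
    using H1 H2 N Na Nb by (simp_all add: algebra_simps divide_less_eq)
  moreover have "1 < a + (N + 1) * b / 2"
    using H1 b by (simp add: field_simps)
  moreover have "0 < a"
    using H2 a by (cases "a = 0") auto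
  ultimately have "lo < hi"
    using N unfolding lo_def hi_def max_less_iff_conj min_less_iff_conj
    by (simp add: pos_divide_less_eq mult.commute)
  then obtain s where s: "lo < s" "s < hi"
    using dense by blast
  show ?thesis
    using s N unfolding lo_def hi_def by (intro that[of s]) (auto simp: field_simps)
qed

lemma SUP_nn_integral_interaction_weight_finite:
  assumes "finite I" "I \<noteq> {}" "0 \<le> a" "0 \<le> b"
    and "1 < a + (real (card I) - 1) * b / 2" "1 < real (card I) * a"
  shows "(SUP c. \<integral>\<^sup>+x. ennreal (interaction_weight I a b c x) \<partial>PiM I (\<lambda>_. lborel)) < \<infinity>"
  using assms
proof (induction "card I" arbitrary: I a)
  case 0
  then show ?case by simp
next
  case (Suc n)
  show ?case
  proof (cases "n = 0")
    case True
    then have "card I = 1"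
      using Suc.hyps(2) by simp
    then obtain k where "I = {k}"
      by (rule card_1_singletonE)
    show ?thesis
    proof (rule SUP_nn_integral_interaction_weight_finite_step[where s=0])
      fix j assume "j \<in> I"
      then have empty: "I - {j} = {}"
        using \<open>I = {k}\<close> by simp
      show "(SUP c. \<integral>\<^sup>+x. ennreal (interaction_weight (I - {j}) (a - 0 + b) b c x)
          \<partial>PiM (I - {j}) (\<lambda>_. lborel)) < \<infinity>"
        unfolding empty nn_integral_interaction_weight_empty by simp
    qed (use \<open>card I = 1\<close> Suc.prems(1,2,3,6) in simp_all)
  next
    case False
    have n: "1 \<le> real n" "1 < a + real n * b / 2" "1 < (real n + 1) * a"
      using False Suc.prems(5,6) Suc.hyps(2)[symmetric] by (simp_all add: algebra_simps)
    obtain s where s: "0 \<le> s" "s \<le> a" "1 < a + real n * s"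
      "1 < (a - s + b) + (real n - 1) * b / 2" "1 < real n * (a - s + b)"
      by (rule split_exponent_exists[OF n(1) Suc.prems(3,4) n(2,3)])
    show ?thesis
    proof (rule SUP_nn_integral_interaction_weight_finite_step[OF _ _ s(1,2)])
      fix k assume "k \<in> I"
      then have card: "card (I - {k}) = n"
        using Suc.hyps(2) by simp
      then have "I - {k} \<noteq> {}"
        using False by (metis card.empty)
      then show "(SUP c. \<integral>\<^sup>+x. ennreal (interaction_weight (I - {k}) (a - s + b) b c x)
          \<partial>PiM (I - {k}) (\<lambda>_. lborel)) < \<infinity>"
        using Suc.hyps(1)[of "I - {k}" "a - s + b"] Suc.prems(1,4) s(1,2,4,5) card by simp
    qed (use Suc.prems(1,2) Suc.hyps(2)[symmetric] s(3) in simp_all)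
  qed
qed

theorem lemma2p18:
  fixes m :: nat and a b :: real
  assumes "a \<ge> 0" and "b \<ge> 0"
    and "a + (real m - 1) * b / 2 > 1" and "real m * a > 1"
  shows "(\<integral>\<^sup>+ x. ennreal ((\<Prod>j<m. 1 / (1 + \<bar>x j\<bar> powr a)) *
            (\<Prod>(i, j) \<in> {(i, j). i < j \<and> j < m}. 1 / (1 + \<bar>x i - x j\<bar> powr b)))
          \<partial>(PiM {..<m} (\<lambda>_. lborel))) < \<infinity>"
proof -
  have "m \<noteq> 0"
    using assms(4) by (cases m) auto
  have "ordered_pairs {..<m} = {(i, j). i < j \<and> j < m}"
    unfolding ordered_pairs_def by auto
  then have integrand: "(\<Prod>j<m. 1 / (1 + \<bar>x j\<bar> powr a)) *
      (\<Prod>(i, j) \<in> {(i, j). i < j \<and> j < m}. 1 / (1 + \<bar>x i - x j\<bar> powr b))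
      = interaction_weight {..<m} a b 0 x" for x
    by (simp add: interaction_weight_def decay_def)
  have "(\<integral>\<^sup>+x. ennreal (interaction_weight {..<m} a b 0 x) \<partial>PiM {..<m} (\<lambda>_. lborel))
      \<le> (SUP c. \<integral>\<^sup>+x. ennreal (interaction_weight {..<m} a b c x) \<partial>PiM {..<m} (\<lambda>_. lborel))"
    by (rule SUP_upper) simp
  also have "\<dots> < \<infinity>"
    by (rule SUP_nn_integral_interaction_weight_finite) (use assms \<open>m \<noteq> 0\<close> in auto)
  finally show ?thesis
    unfolding integrand .
qed

end
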